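(* For every real $t>0$ and every $\sigma\in(\frac12,2)$, \[ \frac{1}{2\pi i}\int_{-\infty-i\sigma}^{+\infty-i\sigma}\Bigl(\frac{t}{2\pi}\Bigr)^{\frac{ix}{2}}\zeta\bigl(\tfrac12+i(t+x)\bigr)\,\frac{\pi}{2\sinh\frac{\pi x}{2}}\,dx=\sum_{n=1}^\infty \frac{1}{n^{\frac12+it}}\,\frac{t}{2\pi n^2+t}. \] In particular $G(t)=\sum_{n\ge1} n^{-\frac12-it}\,\frac{t}{2\pi n^2+t}$.
   Context: $\zeta$ is the Riemann zeta function; $(t/2\pi)^{ix/2}=\exp(\frac{ix}{2}\log\frac{t}{2\pi})$. $G(t)$ denotes the integral on the left-hand side (integration along the horizontal line $\Im x=-\sigma$). *)

theory Defs
  imports "HOL-Analysis.Analysis"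
begin

text \<open>This is the Riemann zeta
  function on the half-plane Re s > 1, which is the only region where it is used
  in the main statement (there the argument has real part 1/2 + sigma > 1).\<close>
definition riemann_zeta :: "complex \<Rightarrow> complex" where
  "riemann_zeta s = (\<Sum>n. 1 / (of_nat (Suc n)) powr s)"

definition G_integrand :: "real \<Rightarrow> complex \<Rightarrow> complex" where
  "G_integrand t x =
     exp (\<i> * x / 2 * of_real (ln (t / (2 * pi))))
     * riemann_zeta (1/2 + \<i> * (of_real t + x))
     * (of_real pi / (2 * sinh (of_real pi * x / 2)))"

end

theory Submission
  imports Defs "HOL-Complex_Analysis.Complex_Analysis" "HOL-Real_Asymp.Real_Asymp"
begin

text \<open>
  For Im x < -1/2 the zeta factor is an absolutely convergent Dirichlet series, which writes the
  integrand as the sum over n of n^(-1/2-it) K_a(x), where K_a(z) = e^(iaz) pi/(2 sinh(pi z/2)) and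
  a = log(t/2pi)/2 - log n. Shifting the line Im z = -sigma down by 2 multiplies K_a by -e^(2a); the
  only pole crossed is the simple pole at -2i, with residue -e^(2a), and the vertical sides of the
  rectangle vanish in the limit. Hence the integral of K_a over the line is
  2 pi i e^(2a)/(1 + e^(2a)) = 2 pi i t/(2 pi n^2 + t). On the line, |K_a| is at most n^(-sigma)
  times a fixed multiple of e^(-pi|u|/2), and the sum of n^(-1/2-sigma) converges, so the series
  may be integrated term by term.
\<close>

section \<open>Dominated convergence on the real line\<close>

lemma has_integral_exp_minus_abs:
  fixes c :: real
  assumes "c > 0"
  shows "((\<lambda>x. exp (- c * \<bar>x\<bar>)) has_integral 2 / c) UNIV"
proof -
  let ?f = "\<lambda>x::real. exp (- c * \<bar>x\<bar>)"
  have "((\<lambda>x. exp (- c * x)) has_integral 1 / c) {0..}"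
    using has_integral_exp_minus_to_infinity[OF assms, of 0] by simp
  then have right: "(?f has_integral 1 / c) {0..}"
    by (rule has_integral_eq[rotated]) simp
  have "?f absolutely_integrable_on {0..}"
    by (rule nonnegative_absolutely_integrable_1[OF has_integral_integrable[OF right]]) simp
  moreover have "integral {0..} ?f = 1 / c"
    using right by (rule integral_unique)
  ultimately have "(\<lambda>x. ?f (- x)) absolutely_integrable_on {..0} \<and> integral {..0} (\<lambda>x. ?f (- x)) = 1 / c"
    by (subst has_absolute_integral_reflect_real) auto
  then have left: "(?f has_integral 1 / c) {..0}"
    using set_lebesgue_integral_eq_integral(1) integrable_integral by fastforce
  have "negligible ({..0} \<inter> {0::real..})"
    by (simp add: atMost_Int_atLeast)
  then have "(?f has_integral 1 / c + 1 / c) ({..0} \<union> {0..})"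
    by (rule has_integral_Un[OF left right])
  moreover have "{..0} \<union> {0..} = (UNIV :: real set)"
    by auto
  ultimately show ?thesis
    by simp
qed

lemma has_integral_dominated_convergence:
  fixes f :: "nat \<Rightarrow> 'n::euclidean_space \<Rightarrow> 'm::euclidean_space"
  assumes f: "\<And>k. (f k has_integral I k) S" and h: "h integrable_on S"
    and le: "\<And>k x. x \<in> S \<Longrightarrow> norm (f k x) \<le> h x"
    and conv: "\<And>x. x \<in> S \<Longrightarrow> (\<lambda>k. f k x) \<longlonglongrightarrow> g x"
  shows "g integrable_on S" "I \<longlonglongrightarrow> integral S g"
proof -
  have f_int: "f k integrable_on S" for k
    using f by blast
  note dc = dominated_convergence[of f S h g, OF f_int h le conv]
  have "(\<lambda>k. integral S (f k)) = I"
    using f by (auto intro: integral_unique)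
  with dc show "g integrable_on S" "I \<longlonglongrightarrow> integral S g"
    by simp_all
qed

lemma has_integral_UNIV_of_dominated_truncations:
  fixes f :: "real \<Rightarrow> 'a::euclidean_space"
  assumes trunc: "\<And>k. k \<ge> 1 \<Longrightarrow> (f has_integral J k) {-real k..real k}"
    and J: "J \<longlonglongrightarrow> L"
    and h: "h integrable_on UNIV" and le: "\<And>x. norm (f x) \<le> h x"
  shows "(f has_integral L) UNIV"
proof -
  let ?f = "\<lambda>k x. if x \<in> {-real (Suc k)..real (Suc k)} then f x else 0"
  have "(?f k has_integral J (Suc k)) UNIV" for k
    by (subst has_integral_restrict_UNIV) (rule trunc, simp)
  moreover have "norm (?f k x) \<le> h x" for k x
    using le[of x] norm_ge_zero[of "f x"] by (auto simp del: norm_ge_zero)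
  moreover have "(\<lambda>k. ?f k x) \<longlonglongrightarrow> f x" for x
  proof (rule tendsto_eventually)
    have "\<forall>\<^sub>F k in sequentially. \<bar>x\<bar> \<le> real k"
      by (meson eventually_sequentiallyI nat_ceiling_le_eq)
    then show "\<forall>\<^sub>F k in sequentially. ?f k x = f x"
      by eventually_elim auto
  qed
  ultimately have "f integrable_on UNIV" "(\<lambda>k. J (Suc k)) \<longlonglongrightarrow> integral UNIV f"
    using has_integral_dominated_convergence[of ?f "\<lambda>k. J (Suc k)" UNIV h f] h by auto
  moreover have "(\<lambda>k. J (Suc k)) \<longlonglongrightarrow> L"
    using J by (rule LIMSEQ_Suc)
  ultimately show ?thesis
    using LIMSEQ_unique has_integral_integral by metis
qed

lemma has_integral_suminf_dominated:
  fixes f :: "nat \<Rightarrow> 'n::euclidean_space \<Rightarrow> 'm::euclidean_space"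
  assumes f: "\<And>n. (f n has_integral I n) S"
    and le: "\<And>n x. x \<in> S \<Longrightarrow> norm (f n x) \<le> c n * g x"
    and c: "summable c" "\<And>n. c n \<ge> 0"
    and g: "g integrable_on S" "\<And>x. x \<in> S \<Longrightarrow> g x \<ge> 0"
    and sums: "\<And>x. x \<in> S \<Longrightarrow> (\<lambda>n. f n x) sums F x"
  shows "(F has_integral (\<Sum>n. I n)) S"
proof -
  have "((\<lambda>x. \<Sum>n<N. f n x) has_integral (\<Sum>n<N. I n)) S" for N
    using f by (rule has_integral_sum[OF finite_lessThan])
  moreover have "(\<lambda>x. (\<Sum>n. c n) * g x) integrable_on S"
    using g(1) by (rule integrable_on_mult_right)
  moreover have "norm (\<Sum>n<N. f n x) \<le> (\<Sum>n. c n) * g x" if "x \<in> S" for N x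
  proof -
    have "norm (\<Sum>n<N. f n x) \<le> (\<Sum>n<N. c n * g x)"
      using le[OF that] by (intro sum_norm_le) auto
    also have "\<dots> = (\<Sum>n<N. c n) * g x"
      by (simp add: sum_distrib_right)
    also have "\<dots> \<le> (\<Sum>n. c n) * g x"
      using c g(2)[OF that] by (intro mult_right_mono sum_le_suminf) auto
    finally show ?thesis .
  qed
  moreover have "(\<lambda>N. \<Sum>n<N. f n x) \<longlonglongrightarrow> F x" if "x \<in> S" for x
    using sums[OF that] by (simp add: sums_def)
  ultimately have "F integrable_on S" "(\<lambda>N. \<Sum>n<N. I n) \<longlonglongrightarrow> integral S F"
    using has_integral_dominated_convergence[of "\<lambda>N x. \<Sum>n<N. f n x" "\<lambda>N. \<Sum>n<N. I n" S] by blast+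
  then show ?thesis
    using has_integral_integral sums_def sums_unique by metis
qed

section \<open>The sinh kernel\<close>

lemma norm_two_sinh_ge_exp_diff:
  fixes w :: complex
  shows "exp \<bar>Re w\<bar> - exp (- \<bar>Re w\<bar>) \<le> norm (2 * sinh w)"
proof -
  have "\<bar>norm (exp w) - norm (exp (- w))\<bar> \<le> norm (exp w - exp (- w))"
    by (rule norm_triangle_ineq3)
  moreover have "\<bar>exp (Re w) - exp (- Re w)\<bar> = exp \<bar>Re w\<bar> - exp (- \<bar>Re w\<bar>)"
    by (cases "Re w \<ge> 0") auto
  moreover have "2 * sinh w = exp w - exp (- w)"
    by (simp add: sinh_field_def)
  ultimately show ?thesis
    by simp
qed

lemma norm_two_sinh_ge_sin:
  fixes w :: complex
  shows "exp \<bar>Re w\<bar> * \<bar>sin (Im w)\<bar> \<le> norm (2 * sinh w)"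
proof -
  have "Im (2 * sinh w) = sin (Im w) * (exp (Re w) + exp (- Re w))"
    by (simp add: sinh_field_def Im_exp algebra_simps)
  then have "\<bar>sin (Im w)\<bar> * (exp (Re w) + exp (- Re w)) \<le> norm (2 * sinh w)"
    using abs_Im_le_cmod[of "2 * sinh w"] by (simp add: abs_mult)
  moreover have "exp \<bar>Re w\<bar> \<le> exp (Re w) + exp (- Re w)"
    by (cases "Re w \<ge> 0") (auto simp: add_nonneg_pos)
  ultimately show ?thesis
    by (smt (verit, best) abs_ge_zero mult.commute mult_left_mono)
qed

lemma norm_two_sinh_ge:
  fixes w :: complex
  shows "exp \<bar>Re w\<bar> * min (1/2) \<bar>sin (Im w)\<bar> \<le> norm (2 * sinh w)"
proof (cases "exp (- \<bar>Re w\<bar>) \<le> exp \<bar>Re w\<bar> / 2")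
  case True
  have "exp \<bar>Re w\<bar> * min (1/2) \<bar>sin (Im w)\<bar> \<le> exp \<bar>Re w\<bar> * (1/2)"
    by (intro mult_left_mono) auto
  also have "\<dots> \<le> exp \<bar>Re w\<bar> - exp (- \<bar>Re w\<bar>)"
    using True by simp
  finally show ?thesis
    using norm_two_sinh_ge_exp_diff[of w] by linarith
next
  case False
  have "exp \<bar>Re w\<bar> * min (1/2) \<bar>sin (Im w)\<bar> \<le> exp \<bar>Re w\<bar> * \<bar>sin (Im w)\<bar>"
    by (intro mult_left_mono) auto
  then show ?thesis
    using norm_two_sinh_ge_sin[of w] by linarith
qed

lemma sinh_half_pi_eq_0_imp:
  fixes z :: complex
  assumes "sinh (of_real pi * z / 2) = 0"
  shows "Re z = 0 \<and> (\<exists>n::int. Im z = 2 * of_int n)"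
proof -
  let ?w = "of_real pi * z / 2"
  have "exp ?w = exp (- ?w)"
    using assms by (simp add: sinh_field_def)
  then have "exp (?w + ?w) = exp (- ?w + ?w)"
    by (simp only: exp_add)
  then have "exp (of_real pi * z) = 1"
    by (simp add: mult.commute)
  then obtain n :: int where "Re (of_real pi * z) = 0" "Im (of_real pi * z) = of_int (2 * n) * pi"
    by (auto simp: exp_eq_1)
  then show ?thesis
    by auto
qed

lemma sinh_pi_i [simp]: "sinh (of_real pi * \<i>) = (0 :: complex)"
  by (simp add: sinh_field_def exp_minus)

lemma cosh_pi_i [simp]: "cosh (of_real pi * \<i>) = (-1 :: complex)"
  by (simp add: cosh_field_def exp_minus)

lemma sinh_half_pi_shift: "sinh (of_real pi * (z - 2 * \<i>) / 2) = - sinh (of_real pi * z / 2)"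
proof -
  have "of_real pi * (z - 2 * \<i>) / 2 = of_real pi * z / 2 - of_real pi * \<i>"
    by (simp add: field_simps)
  then show ?thesis
    by (simp only: sinh_diff) simp
qed

lemma sinh_half_pi_nonzero_in_strip:
  assumes "-4 < Im z" "Im z < 0" "z \<noteq> - 2 * \<i>"
  shows "sinh (of_real pi * z / 2) \<noteq> 0"
proof
  assume "sinh (of_real pi * z / 2) = 0"
  then obtain n :: int where n: "Re z = 0" "Im z = 2 * of_int n"
    using sinh_half_pi_eq_0_imp by blast
  with assms have "n = -1"
    by linarith
  with n assms show False
    by (simp add: complex_eq_iff)
qed

lemma holomorphic_on_sinh [holomorphic_intros]:
  fixes f :: "complex \<Rightarrow> complex"
  assumes "f holomorphic_on A"
  shows "(\<lambda>x. sinh (f x)) holomorphic_on A"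
  unfolding sinh_field_def using assms by (intro holomorphic_intros) auto

definition sinh_kernel :: "real \<Rightarrow> complex \<Rightarrow> complex" where
  "sinh_kernel a z = exp (\<i> * of_real a * z) * (of_real pi / (2 * sinh (of_real pi * z / 2)))"

lemma sinh_kernel_shift: "sinh_kernel a (z - 2 * \<i>) = - exp (2 * of_real a) * sinh_kernel a z"
proof -
  have "exp (\<i> * of_real a * (z - 2 * \<i>)) = exp (2 * of_real a) * exp (\<i> * of_real a * z)"
    by (simp flip: exp_add add: algebra_simps)
  then show ?thesis
    by (simp add: sinh_kernel_def sinh_half_pi_shift)
qed

lemma norm_sinh_kernel:
  "norm (sinh_kernel a z) = exp (- a * Im z) * pi / norm (2 * sinh (of_real pi * z / 2))"
  by (simp add: sinh_kernel_def norm_mult norm_divide)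

lemma holomorphic_on_sinh_kernel:
  assumes "\<And>z. z \<in> S \<Longrightarrow> sinh (of_real pi * z / 2) \<noteq> 0"
  shows "sinh_kernel a holomorphic_on S"
  unfolding sinh_kernel_def[abs_def] using assms by (intro holomorphic_intros) auto

lemma residue_sinh_kernel: "residue (sinh_kernel a) (- 2 * \<i>) = - exp (2 * of_real a)"
proof -
  let ?z = "- 2 * \<i> :: complex"
  have kernel: "sinh_kernel a = (\<lambda>w. exp (\<i> * of_real a * w) * of_real pi / (2 * sinh (of_real pi * w / 2)))"
    by (simp add: fun_eq_iff sinh_kernel_def)
  have "residue (sinh_kernel a) ?z
          = exp (\<i> * of_real a * ?z) * of_real pi / (of_real pi * cosh (of_real pi * ?z / 2))"
    unfolding kernel
  proof (rule residue_simple_pole_deriv[where s = UNIV])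
    show "((\<lambda>w. 2 * sinh (of_real pi * w / 2)) has_field_derivative
            of_real pi * cosh (of_real pi * ?z / 2)) (at ?z)"
      by (auto intro!: derivative_eq_intros)
  qed (auto intro!: holomorphic_intros)
  also have "\<i> * of_real a * ?z = 2 * of_real a"
    by (simp add: complex_eq_iff)
  finally show ?thesis
    by simp
qed

lemma norm_sinh_kernel_horizontal_le:
  assumes "0 < \<sigma>" "\<sigma> < 2"
  shows "norm (sinh_kernel a (Complex u (- \<sigma>)))
           \<le> exp (a * \<sigma>) * pi / min (1/2) (sin (pi * \<sigma> / 2)) * exp (- (pi / 2) * \<bar>u\<bar>)"
proof -
  let ?m = "min (1/2) (sin (pi * \<sigma> / 2))"
  have sin: "sin (pi * \<sigma> / 2) > 0"
    using assms by (intro sin_gt_zero) auto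
  then have m: "?m > 0"
    by simp
  have lower: "exp (pi * \<bar>u\<bar> / 2) * ?m \<le> norm (2 * sinh (of_real pi * Complex u (- \<sigma>) / 2))"
    using norm_two_sinh_ge[of "of_real pi * Complex u (- \<sigma>) / 2"] sin by (simp add: abs_mult)
  have lower_pos: "exp (pi * \<bar>u\<bar> / 2) * ?m > 0"
    using m by simp
  then have norm_pos: "norm (2 * sinh (of_real pi * Complex u (- \<sigma>) / 2)) > 0"
    using lower by linarith
  have "norm (sinh_kernel a (Complex u (- \<sigma>)))
      = exp (a * \<sigma>) * pi / norm (2 * sinh (of_real pi * Complex u (- \<sigma>) / 2))"
    by (simp add: norm_sinh_kernel)
  also have "\<dots> \<le> exp (a * \<sigma>) * pi / (exp (pi * \<bar>u\<bar> / 2) * ?m)"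
    using lower lower_pos norm_pos sin by (intro divide_left_mono mult_pos_pos) auto
  also have "\<dots> = exp (a * \<sigma>) * pi / ?m * exp (- (pi / 2) * \<bar>u\<bar>)"
    by (simp add: exp_minus field_simps)
  finally show ?thesis .
qed

lemma norm_sinh_kernel_vertical_le:
  assumes "\<bar>Re z\<bar> = R" "R > 0" "-4 \<le> Im z" "Im z \<le> 0"
  shows "norm (sinh_kernel a z) \<le> exp (4 * \<bar>a\<bar>) * pi / (exp (pi * R / 2) - exp (- (pi * R / 2)))"
proof -
  have D: "exp (pi * R / 2) - exp (- (pi * R / 2)) \<le> norm (2 * sinh (of_real pi * z / 2))"
    using norm_two_sinh_ge_exp_diff[of "of_real pi * z / 2"] assms(1) by (simp add: abs_mult)
  have D_pos: "exp (pi * R / 2) - exp (- (pi * R / 2)) > 0"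
    using assms(2) by simp
  then have norm_pos: "norm (2 * sinh (of_real pi * z / 2)) > 0"
    using D by linarith
  have "- a * Im z \<le> \<bar>a\<bar> * \<bar>Im z\<bar>"
    by (metis abs_ge_self abs_minus_cancel abs_mult mult_minus_left)
  also have "\<dots> \<le> \<bar>a\<bar> * 4"
    using assms by (intro mult_left_mono) auto
  finally have "exp (- a * Im z) * pi \<le> exp (4 * \<bar>a\<bar>) * pi"
    by (simp add: mult.commute)
  then have "exp (- a * Im z) * pi / norm (2 * sinh (of_real pi * z / 2))
               \<le> exp (4 * \<bar>a\<bar>) * pi / norm (2 * sinh (of_real pi * z / 2))"
    by (intro divide_right_mono) auto
  also have "\<dots> \<le> exp (4 * \<bar>a\<bar>) * pi / (exp (pi * R / 2) - exp (- (pi * R / 2)))"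
    using D D_pos norm_pos by (intro divide_left_mono mult_pos_pos) auto
  finally show ?thesis
    by (simp add: norm_sinh_kernel)
qed

section \<open>Integrating the kernel along a horizontal line\<close>

lemma has_contour_integral_linepath_same_Im_iff:
  fixes f :: "complex \<Rightarrow> complex"
  assumes "a < b"
  shows "(f has_contour_integral I) (linepath (Complex a c) (Complex b c)) \<longleftrightarrow>
         ((\<lambda>x. f (Complex x c)) has_integral I) {a..b}"
proof -
  have "linepath (Complex a c) (Complex b c) = (+) (\<i> * of_real c) \<circ> linepath (of_real a) (of_real b)"
    by (simp add: fun_eq_iff linepath_def complex_eq_iff algebra_simps)
  then have "(f has_contour_integral I) (linepath (Complex a c) (Complex b c)) \<longleftrightarrow>
             ((\<lambda>z. f (z + \<i> * of_real c)) has_contour_integral I) (linepath (of_real a) (of_real b))"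
    by (simp add: has_contour_integral_translate)
  also have "\<dots> \<longleftrightarrow> ((\<lambda>x. f (of_real x + \<i> * of_real c)) has_integral I) {a..b}"
    using assms by (subst has_contour_integral_linepath_Reals_iff) auto
  finally show ?thesis
    by (simp add: Complex_eq)
qed

lemma path_image_rectpath_in_strip:
  assumes "R > 0" "0 < \<sigma>" "\<sigma> < 2"
  shows "path_image (rectpath (Complex (-R) (-\<sigma> - 2)) (Complex R (-\<sigma>)))
           \<subseteq> {z. -4 < Im z \<and> Im z < 0} - {- 2 * \<i>}"
proof -
  let ?p = "Complex (-R) (-\<sigma> - 2)" and ?q = "Complex R (-\<sigma>)"
  have "path_image (rectpath ?p ?q) = cbox ?p ?q - box ?p ?q"
    using assms by (intro path_image_rectpath_cbox_minus_box) auto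
  moreover have "- 2 * \<i> \<in> box ?p ?q"
    using assms by (auto simp: in_box_complex_iff)
  moreover have "cbox ?p ?q \<subseteq> {z. -4 < Im z \<and> Im z < 0}"
    using assms by (auto simp: in_cbox_complex_iff)
  ultimately show ?thesis
    by auto
qed

lemma contour_integral_rectpath_sinh_kernel:
  assumes "R > 0" "0 < \<sigma>" "\<sigma> < 2"
  shows "contour_integral (rectpath (Complex (-R) (-\<sigma> - 2)) (Complex R (-\<sigma>))) (sinh_kernel a)
           = - 2 * pi * \<i> * exp (2 * of_real a)"
proof -
  let ?S = "{z. -4 < Im z \<and> Im z < 0}"
  let ?p = "Complex (-R) (-\<sigma> - 2)" and ?q = "Complex R (-\<sigma>)"
  have pole: "- 2 * \<i> \<in> box ?p ?q"
    using assms by (auto simp: in_box_complex_iff)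
  have "contour_integral (rectpath ?p ?q) (sinh_kernel a)
          = 2 * pi * \<i> * (\<Sum>z\<in>{- 2 * \<i>}. winding_number (rectpath ?p ?q) z * residue (sinh_kernel a) z)"
  proof (rule Residue_theorem)
    show "open ?S"
      by (intro open_Collect_conj open_halfspace_Im_lt open_halfspace_Im_gt)
    show "connected ?S"
      using convex_connected[OF convex_Int[OF convex_halfspace_Im_gt convex_halfspace_Im_lt]]
      by (simp add: Collect_conj_eq)
    show "sinh_kernel a holomorphic_on ?S - {- 2 * \<i>}"
      by (rule holomorphic_on_sinh_kernel, rule sinh_half_pi_nonzero_in_strip) auto
    show "path_image (rectpath ?p ?q) \<subseteq> ?S - {- 2 * \<i>}"
      using path_image_rectpath_in_strip[OF assms] .
    show "\<forall>z. z \<notin> ?S \<longrightarrow> winding_number (rectpath ?p ?q) z = 0"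
    proof (intro allI impI winding_number_rectpath_outside)
      fix z
      assume "z \<notin> ?S"
      then show "z \<notin> cbox ?p ?q"
        using assms by (auto simp: in_cbox_complex_iff)
    qed (use assms in auto)
  qed auto
  also have "\<dots> = 2 * pi * \<i> * residue (sinh_kernel a) (- 2 * \<i>)"
    using winding_number_rectpath[OF pole] by simp
  also have "\<dots> = - 2 * pi * \<i> * exp (2 * of_real a)"
    unfolding residue_sinh_kernel by simp
  finally show ?thesis .
qed

lemma contour_integral_linepath_sinh_kernel_shift:
  assumes "sinh_kernel a contour_integrable_on linepath A B"
  shows "contour_integral (linepath (A - 2 * \<i>) (B - 2 * \<i>)) (sinh_kernel a)
           = - exp (2 * of_real a) * contour_integral (linepath A B) (sinh_kernel a)"
proof -
  have "linepath (A - 2 * \<i>) (B - 2 * \<i>) = (+) (- 2 * \<i>) \<circ> linepath A B"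
    by (simp add: fun_eq_iff linepath_def algebra_simps)
  then have "contour_integral (linepath (A - 2 * \<i>) (B - 2 * \<i>)) (sinh_kernel a)
               = contour_integral (linepath A B) (\<lambda>z. sinh_kernel a (z - 2 * \<i>))"
    by (simp add: contour_integral_translate)
  also have "\<dots> = contour_integral (linepath A B) (\<lambda>z. - exp (2 * of_real a) * sinh_kernel a z)"
    by (simp add: sinh_kernel_shift)
  also have "\<dots> = - exp (2 * of_real a) * contour_integral (linepath A B) (sinh_kernel a)"
    using assms by (rule contour_integral_lmul)
  finally show ?thesis .
qed

text \<open>The bottom side of the rectangle is the top side times -e^(2a), so the residue theorem
  determines the top side up to the two vertical sides.\<close>

lemma sinh_kernel_rectangle_identity:
  assumes "R > 0" "0 < \<sigma>" "\<sigma> < 2"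
  shows "(1 + exp (2 * of_real a)) * contour_integral (linepath (Complex (-R) (-\<sigma>)) (Complex R (-\<sigma>))) (sinh_kernel a)
       = 2 * pi * \<i> * exp (2 * of_real a)
         + contour_integral (linepath (Complex R (-\<sigma> - 2)) (Complex R (-\<sigma>))) (sinh_kernel a)
         + contour_integral (linepath (Complex (-R) (-\<sigma>)) (Complex (-R) (-\<sigma> - 2))) (sinh_kernel a)"
proof -
  define K E where "K = sinh_kernel a" and "E = exp (2 * of_real a :: complex)"
  define p1 p2 p3 p4 where "p1 = Complex (-R) (-\<sigma> - 2)" and "p2 = Complex R (-\<sigma> - 2)"
    and "p3 = Complex R (-\<sigma>)" and "p4 = Complex (-R) (-\<sigma>)"
  define side where "side x y = contour_integral (linepath x y) K" for x y
  have rectpath: "rectpath p1 p3 = linepath p1 p2 +++ linepath p2 p3 +++ linepath p3 p4 +++ linepath p4 p1"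
    by (simp add: rectpath_def Let_def p1_def p2_def p3_def p4_def)
  have "K holomorphic_on path_image (rectpath p1 p3)"
    unfolding K_def
    by (rule holomorphic_on_sinh_kernel, rule sinh_half_pi_nonzero_in_strip)
      (use path_image_rectpath_in_strip[OF assms] in \<open>auto simp: p1_def p3_def\<close>)
  then have cont: "continuous_on (closed_segment x y) K"
    if "closed_segment x y \<subseteq> path_image (rectpath p1 p3)" for x y
    using that holomorphic_on_imp_continuous_on holomorphic_on_subset by blast
  have int: "K contour_integrable_on linepath x y"
    if "closed_segment x y \<subseteq> path_image (rectpath p1 p3)" for x y
    using cont[OF that] by (rule contour_integrable_continuous_linepath)
  have segments: "closed_segment p1 p2 \<subseteq> path_image (rectpath p1 p3)"
    "closed_segment p2 p3 \<subseteq> path_image (rectpath p1 p3)"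
    "closed_segment p3 p4 \<subseteq> path_image (rectpath p1 p3)"
    "closed_segment p4 p1 \<subseteq> path_image (rectpath p1 p3)"
    "closed_segment p4 p3 \<subseteq> path_image (rectpath p1 p3)"
    unfolding rectpath by (auto simp: path_image_join closed_segment_commute)
  have "contour_integral (rectpath p1 p3) K = side p1 p2 + side p2 p3 + side p3 p4 + side p4 p1"
    unfolding rectpath side_def using int segments by (simp add: contour_integrable_joinI add.assoc)
  moreover have "side p1 p2 = - E * side p4 p3"
  proof -
    have "p1 = p4 - 2 * \<i>" "p2 = p3 - 2 * \<i>"
      by (simp_all add: p1_def p2_def p3_def p4_def complex_eq_iff)
    moreover have "sinh_kernel a contour_integrable_on linepath p4 p3"
      using int segments unfolding K_def by blast
    ultimately show ?thesis
      unfolding side_def K_def E_def by (simp add: contour_integral_linepath_sinh_kernel_shift)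
  qed
  moreover have "side p3 p4 = - side p4 p3"
    unfolding side_def using cont segments by (intro contour_integral_reverse_linepath) auto
  moreover have "contour_integral (rectpath p1 p3) K = - 2 * pi * \<i> * E"
    unfolding K_def E_def p1_def p3_def using assms by (rule contour_integral_rectpath_sinh_kernel)
  moreover have "complex_of_real (- 2 * pi) = - complex_of_real (2 * pi)"
    \<comment> \<open>coercion inference puts \<open>of_real\<close> around the whole constant, which \<open>algebra\<close> cannot see through\<close>
    by simp
  ultimately have "(1 + E) * side p4 p3 = 2 * pi * \<i> * E + side p2 p3 + side p4 p1"
    by algebra
  then show ?thesis
    by (simp add: side_def K_def E_def p1_def p2_def p3_def p4_def)
qed

lemma norm_contour_integral_sinh_kernel_vertical_le:
  assumes "x \<noteq> 0" "0 < \<sigma>" "\<sigma> < 2" "{c, d} = {-\<sigma> - 2, -\<sigma>}"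
  shows "norm (contour_integral (linepath (Complex x c) (Complex x d)) (sinh_kernel a))
           \<le> exp (4 * \<bar>a\<bar>) * pi / (exp (pi * \<bar>x\<bar> / 2) - exp (- (pi * \<bar>x\<bar> / 2))) * 2"
proof -
  have segment: "Re z = x \<and> -\<sigma> - 2 \<le> Im z \<and> Im z \<le> -\<sigma>"
    if "z \<in> closed_segment (Complex x c) (Complex x d)" for z
    using that assms(4) by (subst (asm) closed_segment_same_Re)
      (auto simp: closed_segment_eq_real_ivl doubleton_eq_iff split: if_splits)
  have "sinh_kernel a holomorphic_on closed_segment (Complex x c) (Complex x d)"
    by (rule holomorphic_on_sinh_kernel, rule sinh_half_pi_nonzero_in_strip)
      (use segment assms in force)+
  then have "sinh_kernel a contour_integrable_on linepath (Complex x c) (Complex x d)"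
    by (intro contour_integrable_continuous_linepath holomorphic_on_imp_continuous_on)
  moreover have "norm (sinh_kernel a z)
      \<le> exp (4 * \<bar>a\<bar>) * pi / (exp (pi * \<bar>x\<bar> / 2) - exp (- (pi * \<bar>x\<bar> / 2)))"
    if "z \<in> closed_segment (Complex x c) (Complex x d)" for z
    using segment[OF that] assms by (intro norm_sinh_kernel_vertical_le) auto
  ultimately have "norm (contour_integral (linepath (Complex x c) (Complex x d)) (sinh_kernel a))
      \<le> exp (4 * \<bar>a\<bar>) * pi / (exp (pi * \<bar>x\<bar> / 2) - exp (- (pi * \<bar>x\<bar> / 2)))
        * norm (Complex x d - Complex x c)"
    using assms by (intro contour_integral_bound_linepath) auto
  also have "norm (Complex x d - Complex x c) = 2"
    using assms(4) by (auto simp: doubleton_eq_iff cmod_def)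
  finally show ?thesis .
qed

lemma sinh_kernel_vertical_sides_tendsto_0:
  assumes "0 < \<sigma>" "\<sigma> < 2"
  shows "(\<lambda>k::nat. contour_integral (linepath (Complex (real k) (-\<sigma> - 2)) (Complex (real k) (-\<sigma>))) (sinh_kernel a)
           + contour_integral (linepath (Complex (- real k) (-\<sigma>)) (Complex (- real k) (-\<sigma> - 2))) (sinh_kernel a))
         \<longlonglongrightarrow> 0"
proof (rule Lim_null_comparison)
  let ?B = "\<lambda>R. exp (4 * \<bar>a\<bar>) * pi / (exp (pi * R / 2) - exp (- (pi * R / 2))) * 2"
  show "\<forall>\<^sub>F k in sequentially.
          norm (contour_integral (linepath (Complex (real k) (-\<sigma> - 2)) (Complex (real k) (-\<sigma>))) (sinh_kernel a)
            + contour_integral (linepath (Complex (- real k) (-\<sigma>)) (Complex (- real k) (-\<sigma> - 2))) (sinh_kernel a))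
          \<le> ?B (real k) + ?B (real k)"
  proof (rule eventually_sequentiallyI[of 1])
    fix k :: nat
    assume "k \<ge> 1"
    then have "norm (contour_integral (linepath (Complex (real k) (-\<sigma> - 2)) (Complex (real k) (-\<sigma>)))
                 (sinh_kernel a)) \<le> ?B (real k)"
      and "norm (contour_integral (linepath (Complex (- real k) (-\<sigma>)) (Complex (- real k) (-\<sigma> - 2)))
                 (sinh_kernel a)) \<le> ?B (real k)"
      using assms norm_contour_integral_sinh_kernel_vertical_le[of "real k" \<sigma> "-\<sigma> - 2" "-\<sigma>" a]
        norm_contour_integral_sinh_kernel_vertical_le[of "- real k" \<sigma> "-\<sigma>" "-\<sigma> - 2" a]
      by (auto simp: insert_commute)
    then show "norm (contour_integral (linepath (Complex (real k) (-\<sigma> - 2)) (Complex (real k) (-\<sigma>))) (sinh_kernel a)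
            + contour_integral (linepath (Complex (- real k) (-\<sigma>)) (Complex (- real k) (-\<sigma> - 2))) (sinh_kernel a))
          \<le> ?B (real k) + ?B (real k)"
      by (meson add_mono norm_triangle_ineq order_trans)
  qed
  have "(?B \<longlongrightarrow> 0) at_top"
    by real_asymp
  then show "(\<lambda>k. ?B (real k) + ?B (real k)) \<longlonglongrightarrow> 0"
    using tendsto_add_zero filterlim_compose[OF _ filterlim_real_sequentially] by blast
qed

lemma sinh_kernel_truncated_line_integral_tendsto:
  assumes "0 < \<sigma>" "\<sigma> < 2"
  shows "(\<lambda>k::nat. contour_integral (linepath (Complex (- real k) (-\<sigma>)) (Complex (real k) (-\<sigma>))) (sinh_kernel a))
           \<longlonglongrightarrow> 2 * pi * \<i> * exp (2 * of_real a) / (1 + exp (2 * of_real a))"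
proof -
  define E where "E = exp (2 * of_real a :: complex)"
  define V where "V k = contour_integral (linepath (Complex (real k) (-\<sigma> - 2)) (Complex (real k) (-\<sigma>))) (sinh_kernel a)
      + contour_integral (linepath (Complex (- real k) (-\<sigma>)) (Complex (- real k) (-\<sigma> - 2))) (sinh_kernel a)"
    for k :: nat
  have "1 + E = of_real (1 + exp (2 * a))"
    by (simp add: E_def flip: exp_of_real)
  then have E: "1 + E \<noteq> 0"
    by (metis add_pos_pos exp_gt_zero less_irrefl of_real_eq_0_iff zero_less_one)
  have "(\<lambda>k. (2 * pi * \<i> * E + V k) / (1 + E)) \<longlonglongrightarrow> 2 * pi * \<i> * E / (1 + E)"
    using sinh_kernel_vertical_sides_tendsto_0[OF assms, of a] E
    unfolding V_def[symmetric] by (auto intro!: tendsto_eq_intros)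
  moreover have "\<forall>\<^sub>F k in sequentially. (2 * pi * \<i> * E + V k) / (1 + E)
      = contour_integral (linepath (Complex (- real k) (-\<sigma>)) (Complex (real k) (-\<sigma>))) (sinh_kernel a)"
  proof (rule eventually_sequentiallyI[of 1])
    fix k :: nat
    assume "k \<ge> 1"
    then show "(2 * pi * \<i> * E + V k) / (1 + E)
        = contour_integral (linepath (Complex (- real k) (-\<sigma>)) (Complex (real k) (-\<sigma>))) (sinh_kernel a)"
      using sinh_kernel_rectangle_identity[of "real k" \<sigma> a] assms E
      by (simp add: V_def E_def field_simps add.assoc)
  qed
  ultimately show ?thesis
    unfolding E_def by (rule Lim_transform_eventually)
qed

lemma sinh_kernel_has_integral:
  assumes "0 < \<sigma>" "\<sigma> < 2"
  shows "((\<lambda>u. sinh_kernel a (Complex u (- \<sigma>)))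
           has_integral 2 * pi * \<i> * (exp (2 * of_real a) / (1 + exp (2 * of_real a)))) UNIV"
proof (rule has_integral_UNIV_of_dominated_truncations)
  let ?C = "exp (a * \<sigma>) * pi / min (1/2) (sin (pi * \<sigma> / 2))"
  show "((\<lambda>u. sinh_kernel a (Complex u (- \<sigma>)))
          has_integral contour_integral (linepath (Complex (- real k) (-\<sigma>)) (Complex (real k) (-\<sigma>))) (sinh_kernel a))
          {- real k..real k}" if "k \<ge> 1" for k :: nat
  proof -
    have "sinh_kernel a holomorphic_on closed_segment (Complex (- real k) (-\<sigma>)) (Complex (real k) (-\<sigma>))"
      by (rule holomorphic_on_sinh_kernel, rule sinh_half_pi_nonzero_in_strip)
        (use assms in \<open>auto simp: closed_segment_same_Im complex_eq_iff\<close>)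
    then have "sinh_kernel a contour_integrable_on linepath (Complex (- real k) (-\<sigma>)) (Complex (real k) (-\<sigma>))"
      by (intro contour_integrable_continuous_linepath holomorphic_on_imp_continuous_on)
    then show ?thesis
      using that by (subst has_contour_integral_linepath_same_Im_iff[symmetric])
        (auto intro: has_contour_integral_integral)
  qed
  show "(\<lambda>u. ?C * exp (- (pi / 2) * \<bar>u\<bar>)) integrable_on UNIV"
    using has_integral_exp_minus_abs[of "pi / 2"] by (intro integrable_on_mult_right) auto
  show "norm (sinh_kernel a (Complex u (- \<sigma>))) \<le> ?C * exp (- (pi / 2) * \<bar>u\<bar>)" for u
    using norm_sinh_kernel_horizontal_le[OF assms] .
qed (use sinh_kernel_truncated_line_integral_tendsto[OF assms] in simp)

section \<open>The Dirichlet series of the integrand\<close>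

lemma of_nat_Suc_powr: "(of_nat (Suc n) :: complex) powr s = exp (s * of_real (ln (real (Suc n))))"
proof -
  have "ln (of_nat (Suc n) :: complex) = of_real (ln (real (Suc n)))"
    using Ln_of_nat[of "Suc n"] by simp
  moreover have "(of_nat (Suc n) :: complex) \<noteq> 0"
    by (rule of_nat_neq_0)
  ultimately show ?thesis
    unfolding powr_def by (simp only: if_False)
qed

lemma norm_inverse_of_nat_Suc_powr:
  "norm (1 / (of_nat (Suc n) :: complex) powr s) = real (Suc n) powr (- Re s)"
proof -
  have "norm ((of_nat (Suc n) :: complex) powr s) = real (Suc n) powr Re s"
    by (subst norm_powr_real_powr) auto
  then show ?thesis
    by (simp add: norm_divide powr_minus_divide)
qed

lemma summable_inverse_of_nat_Suc_powr:
  assumes "Re s > 1"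
  shows "summable (\<lambda>n. 1 / (of_nat (Suc n) :: complex) powr s)"
proof (rule summable_norm_cancel)
  have "summable (\<lambda>n. real n powr (- Re s))"
    using assms by (subst summable_real_powr_iff) simp
  then show "summable (\<lambda>n. norm (1 / (of_nat (Suc n) :: complex) powr s))"
    unfolding norm_inverse_of_nat_Suc_powr by (subst summable_Suc_iff)
qed

lemma G_integrand_term_eq:
  "exp (\<i> * x / 2 * of_real (ln (t / (2 * pi)))) * (1 / (of_nat (Suc n)) powr (1/2 + \<i> * (of_real t + x)))
     * (of_real pi / (2 * sinh (of_real pi * x / 2)))
   = 1 / (of_nat (Suc n)) powr (1/2 + \<i> * of_real t) * sinh_kernel (ln (t / (2 * pi)) / 2 - ln (Suc n)) x"
proof -
  define L l where "L = ln (t / (2 * pi))" and "l = ln (real (Suc n))"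
  let ?P = "of_real pi / (2 * sinh (of_real pi * x / 2))"
  have "exp (\<i> * x / 2 * of_real L) * (1 / exp ((1/2 + \<i> * (of_real t + x)) * of_real l)) * ?P
        = exp (\<i> * x / 2 * of_real L) / exp ((1/2 + \<i> * (of_real t + x)) * of_real l) * ?P"
    by simp
  also have "exp (\<i> * x / 2 * of_real L) / exp ((1/2 + \<i> * (of_real t + x)) * of_real l)
        = exp (\<i> * of_real (L / 2 - l) * x) / exp ((1/2 + \<i> * of_real t) * of_real l)"
    by (simp flip: exp_diff add: algebra_simps)
  also have "\<dots> * ?P = 1 / exp ((1/2 + \<i> * of_real t) * of_real l) * (exp (\<i> * of_real (L / 2 - l) * x) * ?P)"
    by simp
  finally show ?thesis
    unfolding sinh_kernel_def of_nat_Suc_powr L_def l_def .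
qed

lemma G_integrand_sums:
  assumes "Im x < - 1/2"
  shows "(\<lambda>n. 1 / (of_nat (Suc n)) powr (1/2 + \<i> * of_real t)
             * sinh_kernel (ln (t / (2 * pi)) / 2 - ln (Suc n)) x) sums G_integrand t x"
proof -
  let ?s = "1/2 + \<i> * (of_real t + x)"
  have "(\<lambda>n. 1 / (of_nat (Suc n)) powr ?s) sums riemann_zeta ?s"
    unfolding riemann_zeta_def using assms by (intro summable_sums summable_inverse_of_nat_Suc_powr) simp
  then have "(\<lambda>n. exp (\<i> * x / 2 * of_real (ln (t / (2 * pi)))) * (1 / (of_nat (Suc n)) powr ?s)
                 * (of_real pi / (2 * sinh (of_real pi * x / 2)))) sums G_integrand t x"
    unfolding G_integrand_def by (intro sums_mult sums_mult2)
  then show ?thesis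
    by (simp only: G_integrand_term_eq)
qed

lemma sinh_kernel_weight_eq:
  assumes "t > 0" "m > 0"
  shows "exp (2 * of_real (ln (t / (2 * pi)) / 2 - ln m)) / (1 + exp (2 * of_real (ln (t / (2 * pi)) / 2 - ln m)))
           = (of_real (t / (2 * pi * m^2 + t)) :: complex)"
proof -
  define q where "q = t / (2 * pi) / m^2"
  have "exp (ln m * 2) = m^2"
    using exp_of_nat_mult[of 2 "ln m"] assms by (simp add: mult.commute)
  then have "exp (2 * (ln (t / (2 * pi)) / 2 - ln m)) = q"
    using assms by (simp add: q_def exp_diff algebra_simps)
  then have exp_eq: "exp (2 * of_real (ln (t / (2 * pi)) / 2 - ln m)) = (of_real q :: complex)"
    by (metis exp_of_real of_real_mult of_real_numeral)
  have "q / (1 + q) = t / (2 * pi * m^2 + t)"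
    using assms by (simp add: q_def field_simps)
  then show ?thesis
    unfolding exp_eq by (metis of_real_1 of_real_add of_real_divide)
qed

lemma summable_G_integrand_term_bounds:
  assumes "\<sigma> > 1/2"
  shows "summable (\<lambda>n. norm (1 / (of_nat (Suc n)) powr (1/2 + \<i> * of_real t))
                          * exp ((ln (t / (2 * pi)) / 2 - ln (Suc n)) * \<sigma>))"
proof -
  have "summable (\<lambda>n. real (Suc n) powr (- 1/2 - \<sigma>))"
    using assms by (subst summable_Suc_iff) (simp add: summable_real_powr_iff)
  then have "summable (\<lambda>n. exp (ln (t / (2 * pi)) * \<sigma> / 2) * real (Suc n) powr (- 1/2 - \<sigma>))"
    by (rule summable_mult)
  moreover have "norm (1 / (of_nat (Suc n)) powr (1/2 + \<i> * of_real t))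
                   * exp ((ln (t / (2 * pi)) / 2 - ln (Suc n)) * \<sigma>)
                 = exp (ln (t / (2 * pi)) * \<sigma> / 2) * real (Suc n) powr (- 1/2 - \<sigma>)" for n
    unfolding norm_inverse_of_nat_Suc_powr by (simp add: powr_def algebra_simps flip: exp_add)
  ultimately show ?thesis
    by simp
qed

lemma sinh_kernel_term_has_integral:
  assumes "t > 0" "0 < \<sigma>" "\<sigma> < 2"
  shows "((\<lambda>u. c / (2 * of_real pi * \<i>) * sinh_kernel (ln (t / (2 * pi)) / 2 - ln (Suc n)) (Complex u (- \<sigma>)))
           has_integral c * of_real (t / (2 * pi * (real (Suc n))^2 + t))) UNIV"
proof (rule has_integral_eq_rhs[OF has_integral_mult_right[OF sinh_kernel_has_integral[OF assms(2,3)]]])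
  let ?E = "exp (2 * of_real (ln (t / (2 * pi)) / 2 - ln (Suc n))) :: complex"
  have "?E / (1 + ?E) = of_real (t / (2 * pi * (real (Suc n))^2 + t))"
    using assms(1) by (rule sinh_kernel_weight_eq) simp
  then show "c * of_real (t / (2 * pi * (real (Suc n))^2 + t))
               = c / (2 * of_real pi * \<i>) * (2 * pi * \<i> * (?E / (1 + ?E)))"
    by (simp add: field_simps)
qed

lemma norm_sinh_kernel_term_le:
  assumes "0 < \<sigma>" "\<sigma> < 2"
  shows "norm (c / (2 * of_real pi * \<i>) * sinh_kernel a (Complex u (- \<sigma>)))
           \<le> norm c * exp (a * \<sigma>)
              * (pi / min (1/2) (sin (pi * \<sigma> / 2)) / (2 * pi) * exp (- (pi / 2) * \<bar>u\<bar>))"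
proof -
  have "norm (c / (2 * of_real pi * \<i>) * sinh_kernel a (Complex u (- \<sigma>)))
          = norm c / (2 * pi) * norm (sinh_kernel a (Complex u (- \<sigma>)))"
    by (simp add: norm_mult norm_divide)
  also have "\<dots> \<le> norm c / (2 * pi)
      * (exp (a * \<sigma>) * pi / min (1/2) (sin (pi * \<sigma> / 2)) * exp (- (pi / 2) * \<bar>u\<bar>))"
    using norm_sinh_kernel_horizontal_le[OF assms] by (intro mult_left_mono) simp_all
  finally show ?thesis
    by (simp add: field_simps)
qed

theorem mainTheorem8:
  fixes t \<sigma> :: real
  assumes "t > 0" and "1/2 < \<sigma>" and "\<sigma> < 2"
  shows "((\<lambda>u::real. G_integrand t (of_real u - \<i> * of_real \<sigma>) / (2 * of_real pi * \<i>))
            has_integral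
          (\<Sum>n. (1 / (of_nat (Suc n)) powr (1/2 + \<i> * of_real t))
                 * of_real (t / (2 * pi * (real (Suc n))^2 + t)))) UNIV"
proof -
  define c where "c n = 1 / (of_nat (Suc n)) powr (1/2 + \<i> * of_real t)" for n
  define a where "a n = ln (t / (2 * pi)) / 2 - ln (real (Suc n))" for n
  define M where "M = pi / min (1/2) (sin (pi * \<sigma> / 2))"
  have \<sigma>: "0 < \<sigma>" "\<sigma> < 2"
    using assms by auto
  then have "sin (pi * \<sigma> / 2) > 0"
    by (intro sin_gt_zero) auto
  then have M_pos: "M > 0"
    by (simp add: M_def)
  have "((\<lambda>u. G_integrand t (Complex u (- \<sigma>)) / (2 * of_real pi * \<i>))
          has_integral (\<Sum>n. c n * of_real (t / (2 * pi * (real (Suc n))^2 + t)))) UNIV"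
  proof (rule has_integral_suminf_dominated)
    show "((\<lambda>u. c n / (2 * of_real pi * \<i>) * sinh_kernel (a n) (Complex u (- \<sigma>)))
            has_integral c n * of_real (t / (2 * pi * (real (Suc n))^2 + t))) UNIV" for n
      unfolding a_def using assms(1) \<sigma> by (rule sinh_kernel_term_has_integral)
    show "norm (c n / (2 * of_real pi * \<i>) * sinh_kernel (a n) (Complex u (- \<sigma>)))
            \<le> norm (c n) * exp (a n * \<sigma>) * (M / (2 * pi) * exp (- (pi / 2) * \<bar>u\<bar>))" for n u
      unfolding M_def using \<sigma> by (rule norm_sinh_kernel_term_le)
    show "summable (\<lambda>n. norm (c n) * exp (a n * \<sigma>))"
      using summable_G_integrand_term_bounds[OF assms(2)] by (simp add: c_def a_def)
    show "(\<lambda>u. M / (2 * pi) * exp (- (pi / 2) * \<bar>u\<bar>)) integrable_on UNIV"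
      using has_integral_exp_minus_abs[of "pi / 2"] by (intro integrable_on_mult_right) auto
    show "(\<lambda>n. c n / (2 * of_real pi * \<i>) * sinh_kernel (a n) (Complex u (- \<sigma>)))
            sums (G_integrand t (Complex u (- \<sigma>)) / (2 * of_real pi * \<i>))" for u
      using sums_divide[OF G_integrand_sums, of "Complex u (- \<sigma>)" t] assms(2)
      by (simp add: c_def a_def)
  qed (use M_pos in auto)
  moreover have "Complex u (- \<sigma>) = of_real u - \<i> * of_real \<sigma>" for u
    by (simp add: complex_eq_iff)
  ultimately show ?thesis
    by (simp add: c_def)
qed

end
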